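(* Consider an episodic RMDP with horizon $H$, rewards $R_h:\mathcal{S}\times\mathcal{A}\to[0,1]$, and $\mathcal{S}\times\mathcal{A}$-rectangular total-variation robust sets of radius $\rho\in[0,1)$. Then for any collection of transition kernels $P=\{P_h\}_{h=1}^H$, any Markov policy $\pi$, and any step $h\in[H]$, $$\max_{(s,a)}Q^\pi_{h,P,\boldsymbol{\Phi}}(s,a)-\min_{(s,a)}Q^\pi_{h,P,\boldsymbol{\Phi}}(s,a)\le\min\{H,\rho^{-1}\},\qquad \max_{s}V^\pi_{h,P,\boldsymbol{\Phi}}(s)-\min_{s}V^\pi_{h,P,\boldsymbol{\Phi}}(s)\le\min\{H,\rho^{-1}\}.$$
   Context: $\mathcal{S},\mathcal{A}$ finite. For a kernel $P_h$ the TV robust set is $\boldsymbol{\Phi}(P_h)=\bigotimes_{(s,a)}\mathcal{P}_\rho(s,a;P_h)$, $\mathcal{P}_\rho(s,a;P_h)=\{\widetilde P\in\Delta(\mathcal{S}):\frac12\sum_{s'}|\widetilde P(s')-P_h(s'|s,a)|\le\rho\}$. For a Markov policy $\pi=\{\pi_h\}$, $\pi_h:\mathcal{S}\to\Delta(\mathcal{A})$, the robust value functions are $V^\pi_{h,P,\boldsymbol{\Phi}}(s)=\inf\mathbb{E}_{\{\widetilde P_i\},\pi}[\sum_{i=h}^HR_i(s_i,a_i)\mid s_h=s]$ and $Q^\pi_{h,P,\boldsymbol{\Phi}}(s,a)=\inf\mathbb{E}_{\{\widetilde P_i\},\pi}[\sum_{i=h}^HR_i(s_i,a_i)\mid s_h=s,a_h=a]$,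 infima over all choices $\widetilde P_i(\cdot|s',a')\in\mathcal{P}_\rho(s',a';P_i)$. $\rho^{-1}=\infty$ when $\rho=0$. *)

theory Defs
  imports Complex_Main
begin

(* Kernels: P h s a s' = P_h(s'|s,a); policy: pol h s a = pi_h(a|s); rewards R h s a.
   Steps are indexed h = 1..H. *)

definition is_dist :: "('s::finite \<Rightarrow> real) \<Rightarrow> bool" where
  "is_dist q \<longleftrightarrow> (\<forall>x. 0 \<le> q x) \<and> (\<Sum>x\<in>UNIV. q x) = 1"

definition TV_ball :: "real \<Rightarrow> ('s::finite \<Rightarrow> real) \<Rightarrow> ('s \<Rightarrow> real) set" where
  "TV_ball \<rho> p = {q. is_dist q \<and> (1/2) * (\<Sum>x\<in>UNIV. \<bar>q x - p x\<bar>) \<le> \<rho>}"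

definition robust_kernels ::
  "nat \<Rightarrow> real \<Rightarrow> (nat \<Rightarrow> 's::finite \<Rightarrow> 'a \<Rightarrow> 's \<Rightarrow> real) \<Rightarrow> (nat \<Rightarrow> 's \<Rightarrow> 'a \<Rightarrow> 's \<Rightarrow> real) set" where
  "robust_kernels H \<rho> P = {Pt. \<forall>i\<in>{1..H}. \<forall>s a. Pt i s a \<in> TV_ball \<rho> (P i s a)}"

primrec V_tail ::
  "(nat \<Rightarrow> 's::finite \<Rightarrow> 'a::finite \<Rightarrow> real) \<Rightarrow> (nat \<Rightarrow> 's \<Rightarrow> 'a \<Rightarrow> real) \<Rightarrow>
   (nat \<Rightarrow> 's \<Rightarrow> 'a \<Rightarrow> 's \<Rightarrow> real) \<Rightarrow> nat \<Rightarrow> nat \<Rightarrow> 's \<Rightarrow> real" where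
  "V_tail R pol Pt 0 h s = 0"
| "V_tail R pol Pt (Suc n) h s =
     (\<Sum>a\<in>UNIV. pol h s a * (R h s a + (\<Sum>s'\<in>UNIV. Pt h s a s' * V_tail R pol Pt n (Suc h) s')))"

(* E_{Pt,pi}[ sum_{i=h}^H R_i(s_i,a_i) | s_h = s ] *)
definition V_eval where
  "V_eval H R pol Pt h s = V_tail R pol Pt (Suc H - h) h s"

definition Q_eval where
  "Q_eval H R pol Pt h s a = R h s a + (\<Sum>s'\<in>UNIV. Pt h s a s' * V_eval H R pol Pt (Suc h) s')"

definition robust_V where
  "robust_V H \<rho> R pol P h s = (INF Pt\<in>robust_kernels H \<rho> P. V_eval H R pol Pt h s)"

definition robust_Q where
  "robust_Q H \<rho> R pol P h s a = (INF Pt\<in>robust_kernels H \<rho> P. Q_eval H R pol Pt h s a)"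

end

theory Submission
  imports Defs
begin

(* Because the robust sets are rectangular, the adversary may choose the kernel of each step
   separately, so the robust values obey the robust Bellman recursion
   V_h = E_pi [R_h + inf_{q in TV ball around P_h} E_q V_(h+1)].
   The inner infimum lies between min V_(h+1) and (1 - rho) max V_(h+1) + rho min V_(h+1): the
   adversary can move mass rho onto a minimiser of V_(h+1). Hence the span d_h of V_h (and of Q_h)
   satisfies d_h <= 1 + (1 - rho) d_(h+1), and this recursion preserves both d <= H - h + 1 and
   rho d <= 1. *)

lemma expectation_mono:
  fixes f g :: "'s::finite \<Rightarrow> real"
  assumes "is_dist q" "\<And>x. f x \<le> g x"
  shows "(\<Sum>x\<in>UNIV. q x * f x) \<le> (\<Sum>x\<in>UNIV. q x * g x)"
  using assms by (auto simp: is_dist_def intro!: sum_mono mult_left_mono)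

lemma expectation_add_const:
  fixes f :: "'s::finite \<Rightarrow> real"
  assumes "is_dist q"
  shows "(\<Sum>x\<in>UNIV. q x * (f x + c)) = (\<Sum>x\<in>UNIV. q x * f x) + c"
  using assms by (simp add: is_dist_def distrib_left sum.distrib flip: sum_distrib_right)

lemma expectation_bounds:
  fixes f :: "'s::finite \<Rightarrow> real"
  assumes "is_dist q" "\<And>x. L \<le> f x" "\<And>x. f x \<le> U"
  shows "L \<le> (\<Sum>x\<in>UNIV. q x * f x) \<and> (\<Sum>x\<in>UNIV. q x * f x) \<le> U"
  using expectation_mono[OF assms(1), of "\<lambda>_. L" f] expectation_mono[OF assms(1), of f "\<lambda>_. U"]
    expectation_add_const[OF assms(1), of "\<lambda>_. 0"] assms by simp

lemma expectation_ge_Min: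
  fixes f :: "'s::finite \<Rightarrow> real"
  assumes "is_dist q"
  shows "Min (range f) \<le> (\<Sum>x\<in>UNIV. q x * f x)"
  using expectation_bounds[OF assms, of "Min (range f)" f "Max (range f)"] by simp

lemma expectation_le_Max:
  fixes f :: "'s::finite \<Rightarrow> real"
  assumes "is_dist q"
  shows "(\<Sum>x\<in>UNIV. q x * f x) \<le> Max (range f)"
  using expectation_bounds[OF assms, of "Min (range f)" f "Max (range f)"] by simp

lemma TV_ball_center: "is_dist p \<Longrightarrow> 0 \<le> \<rho> \<Longrightarrow> p \<in> TV_ball \<rho> p"
  by (simp add: TV_ball_def)

lemma TV_ball_mix_point_mass:
  fixes p :: "'s::finite \<Rightarrow> real"
  assumes p: "is_dist p" and \<rho>: "0 \<le> \<rho>" "\<rho> \<le> 1"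
  shows "(\<lambda>x. (1 - \<rho>) * p x + \<rho> * (if x = y then 1 else 0)) \<in> TV_ball \<rho> p"
proof -
  let ?q = "\<lambda>x. (1 - \<rho>) * p x + \<rho> * (if x = y then 1 else 0)"
  have q_diff: "?q x - p x = \<rho> * ((if x = y then 1 else 0) - p x)" for x
    by (simp add: algebra_simps)
  have "(\<Sum>x\<in>UNIV. \<bar>?q x - p x\<bar>) = (\<Sum>x\<in>UNIV. \<rho> * \<bar>(if x = y then 1 else 0) - p x\<bar>)"
    using \<rho> by (simp add: q_diff abs_mult)
  also have "\<dots> \<le> (\<Sum>x\<in>UNIV. \<rho> * ((if x = y then 1 else 0) + p x))"
    using p \<rho> by (intro sum_mono mult_left_mono) (auto simp: is_dist_def abs_le_iff)
  also have "\<dots> = 2 * \<rho>"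
    using p by (simp add: is_dist_def sum.distrib flip: sum_distrib_left)
  finally have "(1 / 2) * (\<Sum>x\<in>UNIV. \<bar>?q x - p x\<bar>) \<le> \<rho>"
    by simp
  moreover have "is_dist ?q"
    using p \<rho> unfolding is_dist_def by (simp add: sum.distrib flip: sum_distrib_left)
  ultimately show ?thesis
    by (simp add: TV_ball_def)
qed

definition robust_expect :: "real \<Rightarrow> ('s::finite \<Rightarrow> real) \<Rightarrow> ('s \<Rightarrow> real) \<Rightarrow> real" where
  "robust_expect \<rho> p f = (INF q\<in>TV_ball \<rho> p. \<Sum>x\<in>UNIV. q x * f x)"

lemma bdd_below_TV_ball_expectations:
  fixes f :: "'s::finite \<Rightarrow> real"
  shows "bdd_below ((\<lambda>q. \<Sum>x\<in>UNIV. q x * f x) ` TV_ball \<rho> p)"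
  by (rule bdd_belowI[of _ "Min (range f)"]) (auto simp: TV_ball_def intro: expectation_ge_Min)

lemma robust_expect_le:
  fixes f :: "'s::finite \<Rightarrow> real"
  assumes "q \<in> TV_ball \<rho> p"
  shows "robust_expect \<rho> p f \<le> (\<Sum>x\<in>UNIV. q x * f x)"
  unfolding robust_expect_def using assms by (intro cINF_lower bdd_below_TV_ball_expectations)

lemma Min_le_robust_expect:
  fixes f :: "'s::finite \<Rightarrow> real"
  assumes "is_dist p" "0 \<le> \<rho>"
  shows "Min (range f) \<le> robust_expect \<rho> p f"
  unfolding robust_expect_def using assms
  by (intro cINF_greatest) (auto simp: TV_ball_def intro: expectation_ge_Min)

lemma robust_expect_approx:
  fixes f :: "'s::finite \<Rightarrow> real"
  assumes "is_dist p" "0 \<le> \<rho>" "0 < e"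
  shows "\<exists>q\<in>TV_ball \<rho> p. (\<Sum>x\<in>UNIV. q x * f x) < robust_expect \<rho> p f + e"
proof -
  have "TV_ball \<rho> p \<noteq> {}"
    using TV_ball_center[OF assms(1,2)] by blast
  moreover have "robust_expect \<rho> p f < robust_expect \<rho> p f + e"
    using assms(3) by simp
  ultimately show ?thesis
    unfolding robust_expect_def
    by (subst (asm) cInf_less_iff[OF _ bdd_below_TV_ball_expectations]) auto
qed

lemma robust_expect_le_mix_Min:
  fixes f :: "'s::finite \<Rightarrow> real"
  assumes p: "is_dist p" and \<rho>: "0 \<le> \<rho>" "\<rho> \<le> 1"
  shows "robust_expect \<rho> p f \<le> (1 - \<rho>) * Max (range f) + \<rho> * Min (range f)"
proof -
  have "Min (range f) \<in> range f"
    by (simp add: Min_in)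
  then obtain y where y: "f y = Min (range f)"
    by (metis rangeE)
  let ?q = "\<lambda>x. (1 - \<rho>) * p x + \<rho> * (if x = y then 1 else 0)"
  have "robust_expect \<rho> p f \<le> (\<Sum>x\<in>UNIV. ?q x * f x)"
    using TV_ball_mix_point_mass[OF p \<rho>] by (rule robust_expect_le)
  also have "\<dots> = (\<Sum>x\<in>UNIV. (1 - \<rho>) * (p x * f x) + \<rho> * (if x = y then f x else 0))"
    by (intro sum.cong) (auto simp: algebra_simps)
  also have "\<dots> = (1 - \<rho>) * (\<Sum>x\<in>UNIV. p x * f x) + \<rho> * f y"
    by (simp add: sum.distrib flip: sum_distrib_left)
  also have "\<dots> \<le> (1 - \<rho>) * Max (range f) + \<rho> * Min (range f)"
    using expectation_le_Max[OF p, of f] \<rho> y by (simp add: mult_left_mono)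
  finally show ?thesis .
qed

definition spread :: "('b::finite \<Rightarrow> real) \<Rightarrow> real" where
  "spread g = Max (range g) - Min (range g)"

lemma spread_nonneg: "0 \<le> spread g"
  unfolding spread_def by (meson Max_ge Min_le finite_UNIV finite_imageI rangeI order_trans diff_ge_0_iff_ge)

lemma spread_le:
  fixes g :: "'b::finite \<Rightarrow> real"
  assumes "\<And>x. L \<le> g x" "\<And>x. g x \<le> U"
  shows "spread g \<le> U - L"
proof -
  have "Max (range g) \<le> U" "L \<le> Min (range g)"
    using assms by auto
  then show ?thesis
    unfolding spread_def by linarith
qed

lemma spread_step:
  fixes f :: "'b::finite \<Rightarrow> real" and g :: "'c::finite \<Rightarrow> real"
  assumes \<rho>: "0 \<le> \<rho>" "\<rho> \<le> 1" and f: "spread f \<le> n" "\<rho> * spread f \<le> 1"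
    and g: "\<And>y. Min (range f) \<le> g y" "\<And>y. g y \<le> 1 + (1 - \<rho>) * Max (range f) + \<rho> * Min (range f)"
  shows "spread g \<le> Suc n \<and> \<rho> * spread g \<le> 1"
proof
  have "spread g \<le> (1 + (1 - \<rho>) * Max (range f) + \<rho> * Min (range f)) - Min (range f)"
    by (rule spread_le) (use g in auto)
  then have g_le: "spread g \<le> 1 + (1 - \<rho>) * spread f"
    by (simp add: spread_def algebra_simps)
  have "(1 - \<rho>) * spread f \<le> spread f"
    using \<rho> spread_nonneg[of f] by (simp add: mult_left_le_one_le)
  then show "spread g \<le> Suc n"
    using g_le f by simp
  have "\<rho> * spread g \<le> \<rho> * (1 + (1 - \<rho>) * spread f)"
    using g_le \<rho>(1) by (rule mult_left_mono)
  also have "\<dots> = \<rho> + (1 - \<rho>) * (\<rho> * spread f)"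
    by (simp add: algebra_simps)
  also have "\<dots> \<le> \<rho> + (1 - \<rho>) * 1"
    using f \<rho> by (intro add_left_mono mult_left_mono) auto
  finally show "\<rho> * spread g \<le> 1"
    by simp
qed

lemma cINF_eq_if_approx:
  fixes F :: "'b \<Rightarrow> real"
  assumes "K \<noteq> {}" "\<And>x. x \<in> K \<Longrightarrow> w \<le> F x" "\<And>e. 0 < e \<Longrightarrow> \<exists>x\<in>K. F x \<le> w + e"
  shows "(INF x\<in>K. F x) = w"
proof (rule antisym)
  have bdd: "bdd_below (F ` K)"
    using assms(2) by (intro bdd_belowI) auto
  show "(INF x\<in>K. F x) \<le> w"
  proof (rule field_le_epsilon)
    fix e :: real
    assume "0 < e"
    then obtain x where "x \<in> K" "F x \<le> w + e"
      using assms(3) by blast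
    then show "(INF x\<in>K. F x) \<le> w + e"
      using cINF_lower[OF bdd] by (meson order_trans)
  qed
  show "w \<le> (INF x\<in>K. F x)"
    using assms(1,2) by (rule cINF_greatest)
qed

lemma robust_kernels_update:
  assumes "Pt \<in> robust_kernels H \<rho> P" "\<And>s a. q s a \<in> TV_ball \<rho> (P h s a)"
  shows "Pt(h := q) \<in> robust_kernels H \<rho> P"
  using assms by (auto simp: robust_kernels_def)

lemma V_tail_cong_future:
  assumes "\<And>i. h \<le> i \<Longrightarrow> Pt i = Pt' i"
  shows "V_tail R pol Pt n h s = V_tail R pol Pt' n h s"
  using assms
proof (induction n arbitrary: h s)
  case 0
  then show ?case by simp
next
  case (Suc n)
  have "V_tail R pol Pt n (Suc h) s' = V_tail R pol Pt' n (Suc h) s'" for s'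
    using Suc.prems by (intro Suc.IH) auto
  then show ?case
    using Suc.prems by simp
qed

definition Q_tail ::
  "(nat \<Rightarrow> 's::finite \<Rightarrow> 'a::finite \<Rightarrow> real) \<Rightarrow> (nat \<Rightarrow> 's \<Rightarrow> 'a \<Rightarrow> real) \<Rightarrow>
   (nat \<Rightarrow> 's \<Rightarrow> 'a \<Rightarrow> 's \<Rightarrow> real) \<Rightarrow> nat \<Rightarrow> nat \<Rightarrow> 's \<Rightarrow> 'a \<Rightarrow> real" where
  "Q_tail R pol Pt n h s a = R h s a + (\<Sum>s'\<in>UNIV. Pt h s a s' * V_tail R pol Pt n (Suc h) s')"

lemma V_tail_Suc_Q_tail:
  "V_tail R pol Pt (Suc n) h s = (\<Sum>a\<in>UNIV. pol h s a * Q_tail R pol Pt n h s a)"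
  by (simp add: Q_tail_def)

lemma Q_eval_eq_Q_tail: "Q_eval H R pol Pt h s a = Q_tail R pol Pt (H - h) h s a"
  by (simp add: Q_eval_def V_eval_def Q_tail_def)

locale finite_horizon_rmdp =
  fixes H :: nat and \<rho> :: real
    and R :: "nat \<Rightarrow> 's::finite \<Rightarrow> 'a::finite \<Rightarrow> real"
    and P :: "nat \<Rightarrow> 's \<Rightarrow> 'a \<Rightarrow> 's \<Rightarrow> real"
    and pol :: "nat \<Rightarrow> 's \<Rightarrow> 'a \<Rightarrow> real"
  assumes rho: "0 \<le> \<rho>" "\<rho> < 1"
    and R01: "\<And>i s a. i \<in> {1..H} \<Longrightarrow> 0 \<le> R i s a \<and> R i s a \<le> 1"
    and P_dist: "\<And>i s a. i \<in> {1..H} \<Longrightarrow> is_dist (P i s a)"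
    and pol_dist: "\<And>i s. i \<in> {1..H} \<Longrightarrow> is_dist (pol i s)"
begin

lemma nominal_in_robust_kernels: "P \<in> robust_kernels H \<rho> P"
  using P_dist rho by (auto simp: robust_kernels_def intro: TV_ball_center)

lemma robust_kernel_dist:
  "Pt \<in> robust_kernels H \<rho> P \<Longrightarrow> i \<in> {1..H} \<Longrightarrow> is_dist (Pt i s a)"
  by (simp add: robust_kernels_def TV_ball_def)

primrec robust_dp_V :: "nat \<Rightarrow> nat \<Rightarrow> 's \<Rightarrow> real" where
  "robust_dp_V 0 h s = 0"
| "robust_dp_V (Suc n) h s =
     (\<Sum>a\<in>UNIV. pol h s a * (R h s a + robust_expect \<rho> (P h s a) (robust_dp_V n (Suc h))))"

definition robust_dp_Q :: "nat \<Rightarrow> nat \<Rightarrow> 's \<Rightarrow> 'a \<Rightarrow> real" where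
  "robust_dp_Q n h s a = R h s a + robust_expect \<rho> (P h s a) (robust_dp_V n (Suc h))"

lemma robust_dp_V_Suc_Q: "robust_dp_V (Suc n) h s = (\<Sum>a\<in>UNIV. pol h s a * robust_dp_Q n h s a)"
  by (simp add: robust_dp_Q_def)

lemma robust_dp_Q_le_Q_tail:
  assumes Pt: "Pt \<in> robust_kernels H \<rho> P" and h: "h \<in> {1..H}"
    and V: "\<And>s'. robust_dp_V n (Suc h) s' \<le> V_tail R pol Pt n (Suc h) s'"
  shows "robust_dp_Q n h s a \<le> Q_tail R pol Pt n h s a"
proof -
  have "robust_expect \<rho> (P h s a) (robust_dp_V n (Suc h))
      \<le> (\<Sum>s'\<in>UNIV. Pt h s a s' * robust_dp_V n (Suc h) s')"
    using Pt h by (intro robust_expect_le) (auto simp: robust_kernels_def)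
  also have "\<dots> \<le> (\<Sum>s'\<in>UNIV. Pt h s a s' * V_tail R pol Pt n (Suc h) s')"
    using robust_kernel_dist[OF Pt h] V by (rule expectation_mono)
  finally show ?thesis
    by (simp add: robust_dp_Q_def Q_tail_def)
qed

lemma robust_dp_V_le_V_tail:
  assumes Pt: "Pt \<in> robust_kernels H \<rho> P"
  shows "1 \<le> h \<Longrightarrow> h + n \<le> Suc H \<Longrightarrow> robust_dp_V n h s \<le> V_tail R pol Pt n h s"
proof (induction n arbitrary: h s)
  case 0
  then show ?case by simp
next
  case (Suc n)
  then have h: "h \<in> {1..H}" by simp
  have "robust_dp_Q n h s a \<le> Q_tail R pol Pt n h s a" for a
    using Suc by (intro robust_dp_Q_le_Q_tail[OF Pt h] Suc.IH) auto
  then show ?case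
    unfolding robust_dp_V_Suc_Q V_tail_Suc_Q_tail by (rule expectation_mono[OF pol_dist[OF h]])
qed


lemma Q_tail_approx_robust_dp_Q:
  assumes Pt: "Pt \<in> robust_kernels H \<rho> P" and h: "h \<in> {1..H}" and e: "0 < e"
    and V: "\<And>s'. V_tail R pol Pt n (Suc h) s' \<le> robust_dp_V n (Suc h) s' + e"
  shows "\<exists>Pt'\<in>robust_kernels H \<rho> P. \<forall>s a. Q_tail R pol Pt' n h s a \<le> robust_dp_Q n h s a + 2 * e"
proof -
  let ?W = "robust_dp_V n (Suc h)"
  have "\<forall>s a. \<exists>q\<in>TV_ball \<rho> (P h s a). (\<Sum>x\<in>UNIV. q x * ?W x) < robust_expect \<rho> (P h s a) ?W + e"
    using robust_expect_approx[OF P_dist[OF h] rho(1) e] by blast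
  then obtain q where q: "\<And>s a. q s a \<in> TV_ball \<rho> (P h s a)"
    "\<And>s a. (\<Sum>x\<in>UNIV. q s a x * ?W x) < robust_expect \<rho> (P h s a) ?W + e"
    by metis
  define Pt' where "Pt' = Pt(h := q)"
  have future: "V_tail R pol Pt' n (Suc h) s' = V_tail R pol Pt n (Suc h) s'" for s'
    by (rule V_tail_cong_future) (simp add: Pt'_def)
  have "Q_tail R pol Pt' n h s a \<le> robust_dp_Q n h s a + 2 * e" for s a
  proof -
    have q_dist: "is_dist (q s a)"
      using q(1) by (simp add: TV_ball_def)
    have "Q_tail R pol Pt' n h s a = R h s a + (\<Sum>s'\<in>UNIV. q s a s' * V_tail R pol Pt n (Suc h) s')"
      by (simp add: Q_tail_def future) (simp add: Pt'_def)
    also have "\<dots> \<le> R h s a + (\<Sum>s'\<in>UNIV. q s a s' * (?W s' + e))"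
      using expectation_mono[OF q_dist V] by simp
    also have "\<dots> = R h s a + (\<Sum>s'\<in>UNIV. q s a s' * ?W s') + e"
      by (simp add: expectation_add_const[OF q_dist])
    also have "\<dots> \<le> robust_dp_Q n h s a + 2 * e"
      using q(2)[of s a] by (simp add: robust_dp_Q_def)
    finally show ?thesis .
  qed
  moreover have "Pt' \<in> robust_kernels H \<rho> P"
    unfolding Pt'_def using Pt q(1) by (rule robust_kernels_update)
  ultimately show ?thesis by blast
qed

lemma V_tail_approx_robust_dp_V:
  assumes "0 < e" "1 \<le> h" "h + n \<le> Suc H"
  shows "\<exists>Pt\<in>robust_kernels H \<rho> P. \<forall>s. V_tail R pol Pt n h s \<le> robust_dp_V n h s + e"
  using assms
proof (induction n arbitrary: h e)
  case 0
  then show ?case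
    using nominal_in_robust_kernels by auto
next
  case (Suc n)
  then have h: "h \<in> {1..H}" by simp
  obtain Pt where "Pt \<in> robust_kernels H \<rho> P"
    "\<And>s'. V_tail R pol Pt n (Suc h) s' \<le> robust_dp_V n (Suc h) s' + e / 2"
    using Suc.IH[of "e / 2" "Suc h"] Suc.prems by auto
  then obtain Pt' where Pt': "Pt' \<in> robust_kernels H \<rho> P"
    and Q: "\<And>s a. Q_tail R pol Pt' n h s a \<le> robust_dp_Q n h s a + e"
    using Q_tail_approx_robust_dp_Q[OF _ h, of Pt "e / 2" n] Suc.prems by auto
  have "V_tail R pol Pt' (Suc n) h s \<le> robust_dp_V (Suc n) h s + e" for s
  proof -
    have "V_tail R pol Pt' (Suc n) h s \<le> (\<Sum>a\<in>UNIV. pol h s a * (robust_dp_Q n h s a + e))"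
      unfolding V_tail_Suc_Q_tail using pol_dist[OF h] Q by (rule expectation_mono)
    also have "\<dots> = robust_dp_V (Suc n) h s + e"
      by (simp only: expectation_add_const[OF pol_dist[OF h]] robust_dp_V_Suc_Q)
    finally show ?thesis .
  qed
  then show ?case
    using Pt' by blast
qed

lemma robust_V_eq_robust_dp_V:
  assumes h: "h \<in> {1..H}"
  shows "robust_V H \<rho> R pol P h s = robust_dp_V (Suc H - h) h s"
  unfolding robust_V_def V_eval_def
proof (rule cINF_eq_if_approx)
  show "robust_kernels H \<rho> P \<noteq> {}"
    using nominal_in_robust_kernels by blast
  show "robust_dp_V (Suc H - h) h s \<le> V_tail R pol Pt (Suc H - h) h s"
    if "Pt \<in> robust_kernels H \<rho> P" for Pt
    using that h by (intro robust_dp_V_le_V_tail) auto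
  show "\<exists>Pt\<in>robust_kernels H \<rho> P. V_tail R pol Pt (Suc H - h) h s \<le> robust_dp_V (Suc H - h) h s + e"
    if "0 < e" for e
    using V_tail_approx_robust_dp_V[OF that, of h "Suc H - h"] h by auto
qed

lemma robust_Q_eq_robust_dp_Q:
  assumes h: "h \<in> {1..H}"
  shows "robust_Q H \<rho> R pol P h s a = robust_dp_Q (H - h) h s a"
  unfolding robust_Q_def Q_eval_eq_Q_tail
proof (rule cINF_eq_if_approx)
  show "robust_kernels H \<rho> P \<noteq> {}"
    using nominal_in_robust_kernels by blast
  show "robust_dp_Q (H - h) h s a \<le> Q_tail R pol Pt (H - h) h s a"
    if Pt: "Pt \<in> robust_kernels H \<rho> P" for Pt
    using h by (intro robust_dp_Q_le_Q_tail[OF Pt h] robust_dp_V_le_V_tail[OF Pt]) auto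
  show "\<exists>Pt\<in>robust_kernels H \<rho> P. Q_tail R pol Pt (H - h) h s a \<le> robust_dp_Q (H - h) h s a + e"
    if e: "0 < e" for e
  proof -
    obtain Pt where "Pt \<in> robust_kernels H \<rho> P"
      "\<And>s'. V_tail R pol Pt (H - h) (Suc h) s' \<le> robust_dp_V (H - h) (Suc h) s' + e / 2"
      using V_tail_approx_robust_dp_V[of "e / 2" "Suc h" "H - h"] e h by auto
    from Q_tail_approx_robust_dp_Q[OF this(1) h _ this(2)] e show ?thesis
      by auto
  qed
qed


lemma robust_dp_Q_bounds:
  assumes h: "h \<in> {1..H}"
  shows "Min (range (robust_dp_V n (Suc h))) \<le> robust_dp_Q n h s a
    \<and> robust_dp_Q n h s a
        \<le> 1 + (1 - \<rho>) * Max (range (robust_dp_V n (Suc h))) + \<rho> * Min (range (robust_dp_V n (Suc h)))"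
  using Min_le_robust_expect[OF P_dist[OF h, of s a] rho(1), where f = "robust_dp_V n (Suc h)"]
    robust_expect_le_mix_Min[OF P_dist[OF h, of s a] rho(1), where f = "robust_dp_V n (Suc h)"]
    rho R01[OF h, of s a]
  unfolding robust_dp_Q_def by linarith

lemma robust_dp_V_spread:
  "1 \<le> h \<Longrightarrow> h + n \<le> Suc H \<Longrightarrow> spread (robust_dp_V n h) \<le> n \<and> \<rho> * spread (robust_dp_V n h) \<le> 1"
proof (induction n arbitrary: h)
  case 0
  then show ?case by (simp add: spread_def)
next
  case (Suc n)
  then have h: "h \<in> {1..H}" by simp
  show ?case
  proof (rule spread_step)
    show "spread (robust_dp_V n (Suc h)) \<le> n" "\<rho> * spread (robust_dp_V n (Suc h)) \<le> 1"
      using Suc by auto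
    show "Min (range (robust_dp_V n (Suc h))) \<le> robust_dp_V (Suc n) h s"
      "robust_dp_V (Suc n) h s \<le> 1 + (1 - \<rho>) * Max (range (robust_dp_V n (Suc h)))
                                    + \<rho> * Min (range (robust_dp_V n (Suc h)))" for s
      unfolding robust_dp_V_Suc_Q using expectation_bounds[OF pol_dist[OF h]] robust_dp_Q_bounds[OF h]
      by blast+
  qed (use rho in auto)
qed

lemma robust_dp_Q_spread:
  assumes h: "h \<in> {1..H}"
  shows "spread (\<lambda>sa. robust_dp_Q (H - h) h (fst sa) (snd sa)) \<le> Suc (H - h)
    \<and> \<rho> * spread (\<lambda>sa. robust_dp_Q (H - h) h (fst sa) (snd sa)) \<le> 1"
  using h rho robust_dp_V_spread[of "Suc h" "H - h"] robust_dp_Q_bounds[OF h]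
  by (intro spread_step) auto

end

theorem proposition4:
  fixes H :: nat and \<rho> :: real
    and R :: "nat \<Rightarrow> 's::finite \<Rightarrow> 'a::finite \<Rightarrow> real"
    and P :: "nat \<Rightarrow> 's \<Rightarrow> 'a \<Rightarrow> 's \<Rightarrow> real"
    and pol :: "nat \<Rightarrow> 's \<Rightarrow> 'a \<Rightarrow> real"
    and h :: nat
  assumes rho: "0 \<le> \<rho>" "\<rho> < 1"
    and R01: "\<And>i s a. i \<in> {1..H} \<Longrightarrow> 0 \<le> R i s a \<and> R i s a \<le> 1"
    and P_dist: "\<And>i s a. i \<in> {1..H} \<Longrightarrow> is_dist (P i s a)"
    and pol_dist: "\<And>i s. i \<in> {1..H} \<Longrightarrow> is_dist (pol i s)"
    and h: "h \<in> {1..H}"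
  shows "(MAX sa. robust_Q H \<rho> R pol P h (fst sa) (snd sa))
           - (MIN sa. robust_Q H \<rho> R pol P h (fst sa) (snd sa)) \<le> real H
       \<and> (\<rho> > 0 \<longrightarrow> (MAX sa. robust_Q H \<rho> R pol P h (fst sa) (snd sa))
           - (MIN sa. robust_Q H \<rho> R pol P h (fst sa) (snd sa)) \<le> 1 / \<rho>)
       \<and> (MAX s. robust_V H \<rho> R pol P h s) - (MIN s. robust_V H \<rho> R pol P h s) \<le> real H
       \<and> (\<rho> > 0 \<longrightarrow> (MAX s. robust_V H \<rho> R pol P h s) - (MIN s. robust_V H \<rho> R pol P h s) \<le> 1 / \<rho>)"
proof -
  interpret finite_horizon_rmdp H \<rho> R P pol
    using rho R01 P_dist pol_dist by unfold_locales
  have Q: "(\<lambda>sa. robust_Q H \<rho> R pol P h (fst sa) (snd sa)) = (\<lambda>sa. robust_dp_Q (H - h) h (fst sa) (snd sa))"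
    using robust_Q_eq_robust_dp_Q[OF h] by simp
  have V: "robust_V H \<rho> R pol P h = robust_dp_V (Suc H - h) h"
    using robust_V_eq_robust_dp_V[OF h] by (simp add: fun_eq_iff)
  have "spread (\<lambda>sa. robust_Q H \<rho> R pol P h (fst sa) (snd sa)) \<le> H
    \<and> \<rho> * spread (\<lambda>sa. robust_Q H \<rho> R pol P h (fst sa) (snd sa)) \<le> 1"
    unfolding Q using robust_dp_Q_spread[OF h] h by auto
  moreover have "spread (robust_V H \<rho> R pol P h) \<le> H \<and> \<rho> * spread (robust_V H \<rho> R pol P h) \<le> 1"
    unfolding V using robust_dp_V_spread[of h "Suc H - h"] h by auto
  ultimately show ?thesis
    unfolding spread_def by (auto simp: pos_le_divide_eq mult.commute)
qed

end
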